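(* Let $\mu$ be a continuous capacity on a measurable space $(\Omega,\mathcal{F})$ and let $\mathcal{F}_0$ be a sub-$\sigma$-algebra of $\mathcal{F}$ with $\mu(A)\in\{0,1\}$ for all $A\in\mathcal{F}_0$. Then: (i) for every $\mathcal{F}_0$-measurable real-valued random variable $\xi$, $$\mu\Big(\Big\{\omega:\ \xi(\omega)\ge \int_{\Omega}\xi\, d\mu\Big\}\Big)=1\quad\text{and}\quad \mu\Big(\Big\{\omega:\ \xi(\omega)\le\int_{\Omega}\xi\, d\bar{\mu}\Big\}\Big)=1;$$ (ii) if moreover $\mu(A\cap B)=1$ for all $A,B\in\mathcal{F}_0$ with $\mu(A)=\mu(B)=1$, then for every $\mathcal{F}_0$-measurable real-valued random variable $\xi$, $$\mu\Big(\Big\{\omega:\ \int_{\Omega}\xi\, d\mu \le\xi(\omega)\le\int_{\Omega}\xi\, d\bar{\mu}\Big\}\Big)=1.$$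
   Context: A capacity on $\mathcal{F}$ is a set function $\mu:\mathcal{F}\to[0,1]$ with $\mu(\emptyset)=0$, $\mu(\Omega)=1$ and $\mu(A)\le\mu(B)$ whenever $A\subseteq B$; it is continuous if $\mu(A_n)\to\mu(A)$ both whenever $A_n\uparrow A$ and whenever $A_n\downarrow A$. The conjugate capacity is $\bar{\mu}(A)=1-\mu(A^c)$. The Choquet integral of a real-valued $\mathcal{F}$-measurable $\xi$ with respect to a capacity $\mu$ is $\int_{\Omega}\xi\, d\mu=\int_{0}^{\infty}\mu(\{\xi\ge t\})\,dt+\int_{-\infty}^0[\mu(\{\xi\ge t\})-1]\,dt$. *)

theory Defs
  imports "HOL-Analysis.Analysis"
begin

text \<open>The measurable space (Omega, F) is represented by a measure M:
  Omega = space M, F = sets M. Set functions are real-valued, considered on sets M.\<close>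

definition capacity :: "'a measure \<Rightarrow> ('a set \<Rightarrow> real) \<Rightarrow> bool" where
  "capacity M \<mu> \<longleftrightarrow>
     \<mu> {} = 0 \<and> \<mu> (space M) = 1 \<and>
     (\<forall>A\<in>sets M. 0 \<le> \<mu> A \<and> \<mu> A \<le> 1) \<and>
     (\<forall>A\<in>sets M. \<forall>B\<in>sets M. A \<subseteq> B \<longrightarrow> \<mu> A \<le> \<mu> B)"

definition continuous_capacity :: "'a measure \<Rightarrow> ('a set \<Rightarrow> real) \<Rightarrow> bool" where
  "continuous_capacity M \<mu> \<longleftrightarrow> capacity M \<mu> \<and>
     (\<forall>A. range A \<subseteq> sets M \<longrightarrow> incseq A \<longrightarrow> (\<lambda>n. \<mu> (A n)) \<longlonglongrightarrow> \<mu> (\<Union>n. A n)) \<and>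
     (\<forall>A. range A \<subseteq> sets M \<longrightarrow> decseq A \<longrightarrow> (\<lambda>n. \<mu> (A n)) \<longlonglongrightarrow> \<mu> (\<Inter>n. A n))"

definition conjugate_capacity :: "'a measure \<Rightarrow> ('a set \<Rightarrow> real) \<Rightarrow> ('a set \<Rightarrow> real)" where
  "conjugate_capacity M \<mu> A = 1 - \<mu> (space M - A)"

definition choquet_integral :: "'a measure \<Rightarrow> ('a set \<Rightarrow> real) \<Rightarrow> ('a \<Rightarrow> real) \<Rightarrow> real" where
  "choquet_integral M \<mu> \<xi> =
     (LINT t:{0..}|lborel. \<mu> {\<omega> \<in> space M. \<xi> \<omega> \<ge> t}) +
     (LINT t:{..<0}|lborel. \<mu> {\<omega> \<in> space M. \<xi> \<omega> \<ge> t} - 1)"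

end

theory Submission
  imports Defs
begin

(* For F0-measurable xi, the function t |-> mu {xi >= t} is antitone, takes only the values
   0 and 1, tends to 1 at -oo and to 0 at +oo, and is left-continuous by continuity of mu
   along decreasing sequences.  Hence it is the indicator of (-oo, c] for some c, and the
   Choquet integral of xi is exactly c, so mu {xi >= c} = 1.  The conjugate capacity is again
   continuous and 0-1 valued on F0, so the same holds for it with d = Choquet integral of xi
   w.r.t. the conjugate; continuity from below then gives conj mu {xi > d} = 0, which is
   mu {xi <= d} = 1. *)

lemma zero_one_antimono_eq_indicator_atMost:
  fixes f :: "real \<Rightarrow> real"
  assumes zero_one: "\<And>t. f t = 0 \<or> f t = 1" and anti: "antimono f"
    and "f a = 1" and "f b = 0"
    and left_closed: "\<And>t. (\<And>s. s < t \<Longrightarrow> f s = 1) \<Longrightarrow> f t = 1"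
  shows "\<exists>c. \<forall>t. f t = indicator {..c} t"
proof -
  define S where "S = {t. f t = 1}"
  have "a \<in> S" using \<open>f a = 1\<close> by (simp add: S_def)
  have "s \<le> b" if "s \<in> S" for s
  proof (rule ccontr)
    assume "\<not> s \<le> b"
    then have "f s \<le> f b" using antimonoD[OF anti, of b s] by simp
    with that \<open>f b = 0\<close> show False by (simp add: S_def)
  qed
  then have "bdd_above S" by (rule bdd_aboveI)
  have level: "f t = 1 \<longleftrightarrow> t \<le> Sup S" for t
  proof
    assume "f t = 1"
    then show "t \<le> Sup S" using cSup_upper[OF _ \<open>bdd_above S\<close>] by (simp add: S_def)
  next
    assume "t \<le> Sup S"
    show "f t = 1"
    proof (rule left_closed)
      fix s assume "s < t"
      with \<open>t \<le> Sup S\<close> have "s < Sup S" by simp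
      then obtain s' where "s' \<in> S" "s < s'"
        using less_cSup_iff[OF _ \<open>bdd_above S\<close>] \<open>a \<in> S\<close> by blast
      then have "f s' \<le> f s" using antimonoD[OF anti, of s s'] by simp
      with \<open>s' \<in> S\<close> show "f s = 1" using zero_one[of s] by (auto simp: S_def)
    qed
  qed
  have "f t = indicator {..Sup S} t" for t
    using zero_one[of t] level[of t] by (auto simp: indicator_def)
  then show ?thesis by blast
qed

lemma choquet_integral_indicator_atMost:
  assumes "\<And>t. \<mu> {\<omega> \<in> space M. t \<le> \<xi> \<omega>} = indicator {..c} t"
  shows "choquet_integral M \<mu> \<xi> = c"
proof -
  have "(\<lambda>t. indicator {0..} t *\<^sub>R \<mu> {\<omega> \<in> space M. t \<le> \<xi> \<omega>}) = (indicator {0..c} :: real \<Rightarrow> real)"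
    by (rule ext) (auto simp: assms indicator_def)
  then have "(LINT t:{0..}|lborel. \<mu> {\<omega> \<in> space M. t \<le> \<xi> \<omega>}) = measure lborel {0..c}"
    by (simp add: set_lebesgue_integral_def)
  also have "\<dots> = max c 0" by (cases "0 \<le> c") auto
  finally have nonneg_part: "(LINT t:{0..}|lborel. \<mu> {\<omega> \<in> space M. t \<le> \<xi> \<omega>}) = max c 0" .
  have "(\<lambda>t. indicator {..<0} t *\<^sub>R (\<mu> {\<omega> \<in> space M. t \<le> \<xi> \<omega>} - 1))
      = (\<lambda>t. - indicator {min c 0<..<0} t :: real)"
    by (rule ext) (auto simp: assms indicator_def)
  then have "(LINT t:{..<0}|lborel. \<mu> {\<omega> \<in> space M. t \<le> \<xi> \<omega>} - 1) = - measure lborel {min c 0<..<0}"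
    by (simp add: set_lebesgue_integral_def)
  also have "\<dots> = min c 0" by simp
  finally have neg_part: "(LINT t:{..<0}|lborel. \<mu> {\<omega> \<in> space M. t \<le> \<xi> \<omega>} - 1) = min c 0" .
  show ?thesis unfolding choquet_integral_def nonneg_part neg_part by simp
qed

lemma capacity_mono:
  "capacity M \<mu> \<Longrightarrow> A \<in> sets M \<Longrightarrow> B \<in> sets M \<Longrightarrow> A \<subseteq> B \<Longrightarrow> \<mu> A \<le> \<mu> B"
  unfolding capacity_def by blast

lemma continuous_capacity_incseq:
  "continuous_capacity M \<mu> \<Longrightarrow> range A \<subseteq> sets M \<Longrightarrow> incseq A \<Longrightarrow>
    (\<lambda>n. \<mu> (A n)) \<longlonglongrightarrow> \<mu> (\<Union>n. A n)"
  unfolding continuous_capacity_def by blast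

lemma continuous_capacity_decseq:
  "continuous_capacity M \<mu> \<Longrightarrow> range A \<subseteq> sets M \<Longrightarrow> decseq A \<Longrightarrow>
    (\<lambda>n. \<mu> (A n)) \<longlonglongrightarrow> \<mu> (\<Inter>n. A n)"
  unfolding continuous_capacity_def by blast

lemma inverse_Suc_Suc_le: "inverse (real (Suc (Suc n))) \<le> inverse (real (Suc n))"
  by (rule le_imp_inverse_le) auto

context
  fixes M :: "'a measure" and \<mu> :: "'a set \<Rightarrow> real" and \<xi> :: "'a \<Rightarrow> real"
  assumes cont: "continuous_capacity M \<mu>" and [measurable]: "\<xi> \<in> borel_measurable M"
begin

lemma continuous_capacity_ge_at_top: "(\<lambda>n. \<mu> {\<omega> \<in> space M. real n \<le> \<xi> \<omega>}) \<longlonglongrightarrow> 0"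
proof -
  have "(\<lambda>n. \<mu> {\<omega> \<in> space M. real n \<le> \<xi> \<omega>}) \<longlonglongrightarrow> \<mu> (\<Inter>n. {\<omega> \<in> space M. real n \<le> \<xi> \<omega>})"
    by (rule continuous_capacity_decseq[OF cont]) (auto simp: decseq_def)
  moreover have "(\<Inter>n. {\<omega> \<in> space M. real n \<le> \<xi> \<omega>}) = {}"
  proof safe
    fix x assume x: "x \<in> (\<Inter>n. {\<omega> \<in> space M. real n \<le> \<xi> \<omega>})"
    obtain n where "\<xi> x < real n" using reals_Archimedean2 by blast
    moreover from x have "real n \<le> \<xi> x" by blast
    ultimately show "x \<in> {}" by simp
  qed
  ultimately show ?thesis using cont by (simp add: continuous_capacity_def capacity_def)
qed

lemma continuous_capacity_ge_at_bot: "(\<lambda>n. \<mu> {\<omega> \<in> space M. - real n \<le> \<xi> \<omega>}) \<longlonglongrightarrow> 1"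
proof -
  have "(\<lambda>n. \<mu> {\<omega> \<in> space M. - real n \<le> \<xi> \<omega>}) \<longlonglongrightarrow> \<mu> (\<Union>n. {\<omega> \<in> space M. - real n \<le> \<xi> \<omega>})"
    by (rule continuous_capacity_incseq[OF cont]) (auto simp: incseq_def)
  moreover have "(\<Union>n. {\<omega> \<in> space M. - real n \<le> \<xi> \<omega>}) = space M"
  proof safe
    fix x assume "x \<in> space M"
    obtain n where "- \<xi> x \<le> real n" using real_arch_simple by blast
    then have "- real n \<le> \<xi> x" by simp
    with \<open>x \<in> space M\<close> show "x \<in> (\<Union>n. {\<omega> \<in> space M. - real n \<le> \<xi> \<omega>})" by blast
  qed
  ultimately show ?thesis using cont by (simp add: continuous_capacity_def capacity_def)
qed

lemma continuous_capacity_ge_from_left: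
  "(\<lambda>n. \<mu> {\<omega> \<in> space M. t - inverse (real (Suc n)) \<le> \<xi> \<omega>}) \<longlonglongrightarrow> \<mu> {\<omega> \<in> space M. t \<le> \<xi> \<omega>}"
proof -
  have "decseq (\<lambda>n. {\<omega> \<in> space M. t - inverse (real (Suc n)) \<le> \<xi> \<omega>})"
    using inverse_Suc_Suc_le by (intro decseq_SucI) (auto intro: order_trans[rotated])
  then have "(\<lambda>n. \<mu> {\<omega> \<in> space M. t - inverse (real (Suc n)) \<le> \<xi> \<omega>})
      \<longlonglongrightarrow> \<mu> (\<Inter>n. {\<omega> \<in> space M. t - inverse (real (Suc n)) \<le> \<xi> \<omega>})"
    by (intro continuous_capacity_decseq[OF cont]) auto
  moreover have "(\<Inter>n. {\<omega> \<in> space M. t - inverse (real (Suc n)) \<le> \<xi> \<omega>}) = {\<omega> \<in> space M. t \<le> \<xi> \<omega>}"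
  proof (intro equalityI subsetI)
    fix x assume x: "x \<in> (\<Inter>n. {\<omega> \<in> space M. t - inverse (real (Suc n)) \<le> \<xi> \<omega>})"
    have "(\<lambda>n. t - inverse (real (Suc n))) \<longlonglongrightarrow> t - 0"
      by (intro tendsto_diff tendsto_const LIMSEQ_inverse_real_of_nat)
    then have "t \<le> \<xi> x" using x by (intro LIMSEQ_le_const2) auto
    with x show "x \<in> {\<omega> \<in> space M. t \<le> \<xi> \<omega>}" by auto
  qed (auto intro: order_trans[rotated])
  ultimately show ?thesis by simp
qed

lemma continuous_capacity_gt_from_right:
  "(\<lambda>n. \<mu> {\<omega> \<in> space M. t + inverse (real (Suc n)) \<le> \<xi> \<omega>}) \<longlonglongrightarrow> \<mu> {\<omega> \<in> space M. t < \<xi> \<omega>}"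
proof -
  have "incseq (\<lambda>n. {\<omega> \<in> space M. t + inverse (real (Suc n)) \<le> \<xi> \<omega>})"
    using inverse_Suc_Suc_le by (intro incseq_SucI) (auto intro: order_trans[rotated])
  then have "(\<lambda>n. \<mu> {\<omega> \<in> space M. t + inverse (real (Suc n)) \<le> \<xi> \<omega>})
      \<longlonglongrightarrow> \<mu> (\<Union>n. {\<omega> \<in> space M. t + inverse (real (Suc n)) \<le> \<xi> \<omega>})"
    by (intro continuous_capacity_incseq[OF cont]) auto
  moreover have "(\<Union>n. {\<omega> \<in> space M. t + inverse (real (Suc n)) \<le> \<xi> \<omega>}) = {\<omega> \<in> space M. t < \<xi> \<omega>}"
  proof (intro equalityI subsetI)
    fix x assume x: "x \<in> {\<omega> \<in> space M. t < \<xi> \<omega>}"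
    then have "0 < \<xi> x - t" by simp
    then obtain n where "inverse (real (Suc n)) < \<xi> x - t" using reals_Archimedean by blast
    then have "t + inverse (real (Suc n)) \<le> \<xi> x" by simp
    with x show "x \<in> (\<Union>n. {\<omega> \<in> space M. t + inverse (real (Suc n)) \<le> \<xi> \<omega>})" by blast
  qed (auto intro: less_le_trans[rotated])
  ultimately show ?thesis by simp
qed

end

lemma continuous_capacity_conjugate:
  assumes cont: "continuous_capacity M \<mu>"
  shows "continuous_capacity M (conjugate_capacity M \<mu>)"
proof -
  have cap: "capacity M \<mu>" using cont by (simp add: continuous_capacity_def)
  have "capacity M (conjugate_capacity M \<mu>)"
    unfolding capacity_def conjugate_capacity_def
  proof (intro conjI ballI impI)
    show "1 - \<mu> (space M - {}) = 0" "1 - \<mu> (space M - space M) = 1"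
      using cap by (simp_all add: capacity_def)
  next
    fix A assume "A \<in> sets M"
    then show "0 \<le> 1 - \<mu> (space M - A)" "1 - \<mu> (space M - A) \<le> 1"
      using cap by (auto simp: capacity_def)
  next
    fix A B assume "A \<in> sets M" "B \<in> sets M" "A \<subseteq> B"
    then have "\<mu> (space M - B) \<le> \<mu> (space M - A)"
      by (intro capacity_mono[OF cap] sets.compl_sets) auto
    then show "1 - \<mu> (space M - A) \<le> 1 - \<mu> (space M - B)" by simp
  qed
  moreover have "(\<lambda>n. conjugate_capacity M \<mu> (A n)) \<longlonglongrightarrow> conjugate_capacity M \<mu> (\<Union>n. A n)"
    if "range A \<subseteq> sets M" "incseq A" for A
  proof -
    have "(\<lambda>n. \<mu> (space M - A n)) \<longlonglongrightarrow> \<mu> (\<Inter>n. space M - A n)"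
      using that by (intro continuous_capacity_decseq[OF cont]) (auto simp: incseq_def decseq_def)
    then show ?thesis by (simp add: conjugate_capacity_def tendsto_diff)
  qed
  moreover have "(\<lambda>n. conjugate_capacity M \<mu> (A n)) \<longlonglongrightarrow> conjugate_capacity M \<mu> (\<Inter>n. A n)"
    if "range A \<subseteq> sets M" "decseq A" for A
  proof -
    have "(\<lambda>n. \<mu> (space M - A n)) \<longlonglongrightarrow> \<mu> (\<Union>n. space M - A n)"
      using that by (intro continuous_capacity_incseq[OF cont]) (auto simp: incseq_def decseq_def)
    then show ?thesis by (simp add: conjugate_capacity_def tendsto_diff)
  qed
  ultimately show ?thesis by (simp add: continuous_capacity_def)
qed

lemma two_valued_LIMSEQ_attained:
  fixes X :: "nat \<Rightarrow> 'a::t2_space"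
  assumes "\<And>n. X n = a \<or> X n = b" and "X \<longlonglongrightarrow> a" and "a \<noteq> b"
  shows "\<exists>n. X n = a"
proof (rule ccontr)
  assume "\<nexists>n. X n = a"
  then have "X = (\<lambda>n. b)" using assms(1) by auto
  with assms(2,3) show False using LIMSEQ_unique[OF tendsto_const] by metis
qed

locale zero_one_continuous_capacity =
  fixes M F0 :: "'a measure" and \<nu> :: "'a set \<Rightarrow> real"
  assumes continuous: "continuous_capacity M \<nu>"
    and space_F0: "space F0 = space M"
    and sets_F0: "sets F0 \<subseteq> sets M"
    and zero_one: "\<And>A. A \<in> sets F0 \<Longrightarrow> \<nu> A = 0 \<or> \<nu> A = 1"
begin

lemma borel_measurable_F0: "\<xi> \<in> borel_measurable F0 \<Longrightarrow> \<xi> \<in> borel_measurable M"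
  using measurable_mono[OF order_refl refl sets_F0 space_F0] by blast

lemma ge_level_set_F0:
  fixes \<xi> :: "'a \<Rightarrow> real"
  shows "\<xi> \<in> borel_measurable F0 \<Longrightarrow> {\<omega> \<in> space M. t \<le> \<xi> \<omega>} \<in> sets F0"
  by (simp add: borel_measurable_iff_ge flip: space_F0)

lemma le_level_set_F0:
  fixes \<xi> :: "'a \<Rightarrow> real"
  shows "\<xi> \<in> borel_measurable F0 \<Longrightarrow> {\<omega> \<in> space M. \<xi> \<omega> \<le> t} \<in> sets F0"
  by (simp add: borel_measurable_iff_le flip: space_F0)

lemma ge_level_set_eq_indicator:
  assumes \<xi>: "\<xi> \<in> borel_measurable F0"
  shows "\<nu> {\<omega> \<in> space M. t \<le> \<xi> \<omega>} = indicator {..choquet_integral M \<nu> \<xi>} t"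
proof -
  note \<xi>_M = borel_measurable_F0[OF \<xi>]
  define f where "f s = \<nu> {\<omega> \<in> space M. s \<le> \<xi> \<omega>}" for s
  have f_zero_one: "f s = 0 \<or> f s = 1" for s
    unfolding f_def using zero_one ge_level_set_F0[OF \<xi>] by blast
  have "\<exists>n. f (- real n) = 1"
    using continuous_capacity_ge_at_bot[OF continuous \<xi>_M] f_zero_one
    by (intro two_valued_LIMSEQ_attained) (auto simp: f_def)
  then obtain a where "f a = 1" by blast
  have "\<exists>n. f (real n) = 0"
    using continuous_capacity_ge_at_top[OF continuous \<xi>_M] f_zero_one
    by (intro two_valued_LIMSEQ_attained) (auto simp: f_def)
  then obtain b where "f b = 0" by blast
  have "antimono f"
    unfolding f_def using sets_F0 ge_level_set_F0[OF \<xi>] continuous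
    by (intro antimonoI capacity_mono) (auto simp: continuous_capacity_def)
  have "f s = 1" if "\<And>s'. s' < s \<Longrightarrow> f s' = 1" for s
  proof -
    have "(\<lambda>n. f (s - inverse (real (Suc n)))) \<longlonglongrightarrow> f s"
      unfolding f_def by (rule continuous_capacity_ge_from_left[OF continuous \<xi>_M])
    moreover have "f (s - inverse (real (Suc n))) = 1" for n by (rule that) simp
    ultimately show ?thesis using LIMSEQ_unique[OF tendsto_const] by force
  qed
  then obtain c where c: "\<And>s. f s = indicator {..c} s"
    using zero_one_antimono_eq_indicator_atMost[OF f_zero_one \<open>antimono f\<close> \<open>f a = 1\<close> \<open>f b = 0\<close>]
    by blast
  then have "choquet_integral M \<nu> \<xi> = c"
    by (intro choquet_integral_indicator_atMost) (simp add: f_def)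
  with c show ?thesis by (simp add: f_def)
qed

lemma ge_choquet_integral:
  "\<xi> \<in> borel_measurable F0 \<Longrightarrow> \<nu> {\<omega> \<in> space M. choquet_integral M \<nu> \<xi> \<le> \<xi> \<omega>} = 1"
  by (simp add: ge_level_set_eq_indicator)

lemma gt_choquet_integral:
  assumes \<xi>: "\<xi> \<in> borel_measurable F0"
  shows "\<nu> {\<omega> \<in> space M. choquet_integral M \<nu> \<xi> < \<xi> \<omega>} = 0"
proof -
  let ?c = "choquet_integral M \<nu> \<xi>"
  have "(\<lambda>n. \<nu> {\<omega> \<in> space M. ?c + inverse (real (Suc n)) \<le> \<xi> \<omega>}) \<longlonglongrightarrow> \<nu> {\<omega> \<in> space M. ?c < \<xi> \<omega>}"
    by (rule continuous_capacity_gt_from_right[OF continuous borel_measurable_F0[OF \<xi>]])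
  moreover have "\<nu> {\<omega> \<in> space M. ?c + inverse (real (Suc n)) \<le> \<xi> \<omega>} = 0" for n
    by (simp add: ge_level_set_eq_indicator[OF \<xi>])
  ultimately show ?thesis using LIMSEQ_unique[OF tendsto_const] by force
qed

end

lemma zero_one_continuous_capacity_conjugate:
  assumes "zero_one_continuous_capacity M F0 \<mu>"
  shows "zero_one_continuous_capacity M F0 (conjugate_capacity M \<mu>)"
proof -
  interpret zero_one_continuous_capacity M F0 \<mu> by fact
  show ?thesis
  proof
    show "continuous_capacity M (conjugate_capacity M \<mu>)"
      by (rule continuous_capacity_conjugate[OF continuous])
    fix A assume "A \<in> sets F0"
    then have "space M - A \<in> sets F0" using space_F0 by (metis sets.compl_sets)
    then show "conjugate_capacity M \<mu> A = 0 \<or> conjugate_capacity M \<mu> A = 1"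
      using zero_one by (auto simp: conjugate_capacity_def)
  qed (fact space_F0 sets_F0)+
qed

lemma (in zero_one_continuous_capacity) le_conjugate_choquet_integral:
  assumes \<xi>: "\<xi> \<in> borel_measurable F0"
  shows "\<nu> {\<omega> \<in> space M. \<xi> \<omega> \<le> choquet_integral M (conjugate_capacity M \<nu>) \<xi>} = 1"
proof -
  interpret conjugate: zero_one_continuous_capacity M F0 "conjugate_capacity M \<nu>"
    by (rule zero_one_continuous_capacity_conjugate) unfold_locales
  let ?d = "choquet_integral M (conjugate_capacity M \<nu>) \<xi>"
  have "space M - {\<omega> \<in> space M. ?d < \<xi> \<omega>} = {\<omega> \<in> space M. \<xi> \<omega> \<le> ?d}" by auto
  then have "conjugate_capacity M \<nu> {\<omega> \<in> space M. ?d < \<xi> \<omega>} = 1 - \<nu> {\<omega> \<in> space M. \<xi> \<omega> \<le> ?d}"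
    by (simp add: conjugate_capacity_def)
  with conjugate.gt_choquet_integral[OF \<xi>] show ?thesis by simp
qed

theorem theorem2:
  fixes M F0 :: "'a measure" and \<mu> :: "'a set \<Rightarrow> real"
  assumes cont: "continuous_capacity M \<mu>"
    and sub_space: "space F0 = space M"
    and sub_sets: "sets F0 \<subseteq> sets M"
    and zero_one: "\<forall>A\<in>sets F0. \<mu> A = 0 \<or> \<mu> A = 1"
  shows "(\<forall>\<xi>. \<xi> \<in> borel_measurable F0 \<longrightarrow>
            \<mu> {\<omega> \<in> space M. \<xi> \<omega> \<ge> choquet_integral M \<mu> \<xi>} = 1 \<and>
            \<mu> {\<omega> \<in> space M. \<xi> \<omega> \<le> choquet_integral M (conjugate_capacity M \<mu>) \<xi>} = 1)
       \<and> ((\<forall>A\<in>sets F0. \<forall>B\<in>sets F0. \<mu> A = 1 \<longrightarrow> \<mu> B = 1 \<longrightarrow> \<mu> (A \<inter> B) = 1) \<longrightarrow>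
          (\<forall>\<xi>. \<xi> \<in> borel_measurable F0 \<longrightarrow>
            \<mu> {\<omega> \<in> space M. choquet_integral M \<mu> \<xi> \<le> \<xi> \<omega> \<and>
                   \<xi> \<omega> \<le> choquet_integral M (conjugate_capacity M \<mu>) \<xi>} = 1))"
proof -
  interpret zero_one_continuous_capacity M F0 \<mu>
    using cont sub_space sub_sets zero_one by unfold_locales auto
  show ?thesis
  proof (intro conjI allI impI)
    fix \<xi> :: "'a \<Rightarrow> real" assume "\<xi> \<in> borel_measurable F0"
    then show "\<mu> {\<omega> \<in> space M. \<xi> \<omega> \<ge> choquet_integral M \<mu> \<xi>} = 1"
      and "\<mu> {\<omega> \<in> space M. \<xi> \<omega> \<le> choquet_integral M (conjugate_capacity M \<mu>) \<xi>} = 1"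
      by (rule ge_choquet_integral, rule le_conjugate_choquet_integral)
  next
    fix \<xi> :: "'a \<Rightarrow> real"
    assume inter: "\<forall>A\<in>sets F0. \<forall>B\<in>sets F0. \<mu> A = 1 \<longrightarrow> \<mu> B = 1 \<longrightarrow> \<mu> (A \<inter> B) = 1"
      and \<xi>: "\<xi> \<in> borel_measurable F0"
    let ?c = "choquet_integral M \<mu> \<xi>" and ?d = "choquet_integral M (conjugate_capacity M \<mu>) \<xi>"
    have "{\<omega> \<in> space M. ?c \<le> \<xi> \<omega> \<and> \<xi> \<omega> \<le> ?d}
        = {\<omega> \<in> space M. ?c \<le> \<xi> \<omega>} \<inter> {\<omega> \<in> space M. \<xi> \<omega> \<le> ?d}" by blast
    then show "\<mu> {\<omega> \<in> space M. ?c \<le> \<xi> \<omega> \<and> \<xi> \<omega> \<le> ?d} = 1"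
      using inter ge_level_set_F0[OF \<xi>] le_level_set_F0[OF \<xi>]
        ge_choquet_integral[OF \<xi>] le_conjugate_choquet_integral[OF \<xi>] by simp
  qed
qed

end
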